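(* Let $\mathbf e_1,\dots,\mathbf e_n\in\mathbb R^n$ be linearly independent, let $K=\{\sum_{i=1}^n\lambda^i\mathbf e_i:\lambda^i\ge 0\}$, and for each $i$ let $\mathbf u_i\in\mathbb R^n$ satisfy $\mathbf e_j^\top\mathbf u_i=0$ for $j\neq i$ and $\mathbf e_i^\top\mathbf u_i=-1$, so that $K^\circ=\{\sum_{i=1}^n\mu^i\mathbf u_i:\mu^i\ge 0\}$. Let $N=\{1,\dots,n\}$ and let $\mathbf x\in\mathbb R^n$. For each subset $I\subset N$, with complement $I^c=N\setminus I$, $\mathbf x$ can be represented in the form $$\mathbf x=\sum_{i\in I}\alpha^i\mathbf e_i+\sum_{j\in I^c}\beta^j\mathbf u_j$$ with real numbers $\alpha^i,\beta^j$. Among the subsets $I\subset N$ (the cases $I=\emptyset$ and $I=N$ included) there exists exactly one for which the coefficients in this representation satisfy $\beta^j>0$ for all $j\in I^c$ and $\alpha^i\ge 0$ for all $i\in I$. For this representation, $$\mathbf P_K\mathbf x=\sum_{i\in I}\alpha^i\mathbf e_i\ (\alpha^i\ge 0)\quad\text{and}\quad \mathbf P_{K^\circ}\mathbf x=\sum_{j\in I^c}\beta^j\mathbf u_j\ (\beta^j>0).$$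
   Context: The polar of $K$ is $K^\circ=\{\mathbf y\in\mathbb R^n:\mathbf y^\top\mathbf z\le 0\ \forall\mathbf z\in K\}$. For a nonempty closed convex set $C\subset\mathbb R^n$, $\mathbf P_C\mathbf x$ denotes the metric (Euclidean) projection of $\mathbf x$ onto $C$, i.e. the unique point of $C$ with $\|\mathbf x-\mathbf P_C\mathbf x\|=\min\{\|\mathbf x-\mathbf y\|:\mathbf y\in C\}$, where $\|\mathbf u\|=\sqrt{\mathbf u^\top\mathbf u}$. *)

theory Defs
  imports "HOL-Analysis.Analysis"
begin

definition polar_cone :: "(real^'n) set \<Rightarrow> (real^'n) set" where
  "polar_cone K = {y. \<forall>z\<in>K. y \<bullet> z \<le> 0}"

abbreviation proj :: "(real^'n) set \<Rightarrow> real^'n \<Rightarrow> real^'n" where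
  "proj C x \<equiv> closest_point C x"

end

theory Submission
  imports Defs
begin

text \<open>The vectors \<open>e\<^sub>i\<close> (\<open>i \<in> I\<close>) and \<open>u\<^sub>j\<close> (\<open>j \<notin> I\<close>) span mutually orthogonal subspaces and
  together form a basis, so every \<open>x\<close> splits as \<open>a + b\<close> along them. When the coefficients are
  sign-correct, \<open>a \<in> K\<close>, \<open>b \<in> K\<degree>\<close> and \<open>a \<bottom> b\<close>, which by the variational inequality
  characterises \<open>a = P\<^sub>K x\<close> and \<open>b = P\<^sub>K\<^sub>\<degree> x\<close>. Conversely Moreau's decomposition
  \<open>x = P\<^sub>K x + (x - P\<^sub>K x)\<close>, expanded in the two generating families, has complementary
  supports, which yields such a representation; it is unique because \<open>I\<close> is recovered from
  \<open>P\<^sub>K\<^sub>\<degree> x\<close> as the set of \<open>k\<close> with \<open>P\<^sub>K\<^sub>\<degree> x \<bullet> e\<^sub>k = 0\<close>.\<close>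

lemma closest_point_add_orthogonal:
  fixes C :: "'a::{real_inner,heine_borel} set"
  assumes "closed C" "convex C" "a \<in> C" "\<forall>y\<in>C. b \<bullet> y \<le> 0" "b \<bullet> a = 0"
  shows "closest_point C (a + b) = a"
proof -
  have "dist (a + b) a \<le> dist (a + b) z" if "z \<in> C" for z
  proof -
    have "(dist (a + b) a)\<^sup>2 = b \<bullet> b"
      by (simp add: dist_norm power2_norm_eq_inner)
    also have "\<dots> \<le> b \<bullet> b - 2 * (b \<bullet> z) + (a - z) \<bullet> (a - z)"
      using bspec[OF assms(4) that] inner_ge_zero[of "a - z"] by linarith
    also have "\<dots> = (dist (a + b) z)\<^sup>2"
      using assms(5)
      by (simp add: dist_norm power2_norm_eq_inner inner_add_left inner_add_right
          inner_diff_left inner_diff_right inner_commute algebra_simps)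
    finally show ?thesis
      by (rule power2_le_imp_le) simp
  qed
  then show ?thesis
    using closest_point_unique[OF assms(2,1,3)] by simp
qed

lemma closed_polar_cone: "closed (polar_cone K)"
  and convex_polar_cone: "convex (polar_cone K)"
proof -
  have eq: "polar_cone K = (\<Inter>z\<in>K. {y. z \<bullet> y \<le> 0})"
    by (auto simp: polar_cone_def inner_commute)
  show "closed (polar_cone K)" "convex (polar_cone K)"
    unfolding eq by (auto intro!: closed_INT convex_INT closed_halfspace_le convex_halfspace_le)
qed

lemma moreau_decomposition:
  fixes K :: "(real^'n) set" and x :: "real^'n"
  assumes "closed K" "convex K" "cone K" "K \<noteq> {}"
  defines "p \<equiv> closest_point K x"
  shows "x - p \<in> polar_cone K" and "(x - p) \<bullet> p = 0"
proof -
  have pK: "p \<in> K"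
    unfolding p_def using closest_point_in_set[OF assms(1,4)] .
  have var_ineq: "(x - p) \<bullet> (z - p) \<le> 0" if "z \<in> K" for z
    unfolding p_def using closest_point_dot[OF assms(2,1) that] .
  have "0 \<in> K" "2 *\<^sub>R p \<in> K"
    using assms(3,4) pK cone_contains_0 by (auto simp: cone_def)
  from var_ineq[OF this(1)] var_ineq[OF this(2)]
  show orth: "(x - p) \<bullet> p = 0"
    by (simp add: inner_diff_right algebra_simps)
  show "x - p \<in> polar_cone K"
    unfolding polar_cone_def
  proof (intro CollectI ballI)
    fix z assume "z \<in> K"
    \<comment> \<open>a convex cone is closed under addition\<close>
    then have "(1/2) *\<^sub>R z + (1/2) *\<^sub>R p \<in> K"
      using pK assms(2) by (intro convexD) auto
    moreover have "(0::real) \<le> 2"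
      by simp
    ultimately have "2 *\<^sub>R ((1/2) *\<^sub>R z + (1/2) *\<^sub>R p) \<in> K"
      using assms(3) unfolding cone_def by blast
    then have "z + p \<in> K"
      by (simp add: scaleR_add_right)
    then show "(x - p) \<bullet> z \<le> 0"
      using var_ineq[of "z + p"] orth by (simp add: inner_diff_right inner_add_right)
  qed
qed

locale biorthogonal_system =
  fixes e u :: "'n::finite \<Rightarrow> real^'n"
  assumes inner_e_u: "\<And>i j. e j \<bullet> u i = (if j = i then -1 else 0)"
begin

definition primal_cone :: "(real^'n) set" where
  "primal_cone = {(\<Sum>i\<in>UNIV. l i *\<^sub>R e i) | l. \<forall>i. l i \<ge> 0}"

definition dual_cone :: "(real^'n) set" where
  "dual_cone = {(\<Sum>i\<in>UNIV. m i *\<^sub>R u i) | m. \<forall>i. m i \<ge> 0}"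

lemma inner_sum_e_u: "(\<Sum>i\<in>I. \<alpha> i *\<^sub>R e i) \<bullet> u k = (if k \<in> I then - \<alpha> k else 0)"
  by (simp add: inner_sum_left inner_e_u if_distrib cong: if_cong)

lemma inner_sum_u_e: "(\<Sum>j\<in>J. \<beta> j *\<^sub>R u j) \<bullet> e k = (if k \<in> J then - \<beta> k else 0)"
  by (simp add: inner_sum_left inner_commute[of "u _"] inner_e_u if_distrib cong: if_cong)

lemma orthogonal_sum_e_sum_u:
  "(\<Sum>i\<in>I. \<alpha> i *\<^sub>R e i) \<bullet> (\<Sum>j\<in>UNIV - I. \<beta> j *\<^sub>R u j) = 0"
  by (simp add: inner_sum_right inner_sum_e_u)

lemma mixed_representation_exists:
  "\<exists>\<alpha> \<beta>. x = (\<Sum>i\<in>I. \<alpha> i *\<^sub>R e i) + (\<Sum>j\<in>UNIV - I. \<beta> j *\<^sub>R u j)"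
proof -
  define f where "f c = (\<Sum>i\<in>I. (c $ i) *\<^sub>R e i) + (\<Sum>j\<in>UNIV - I. (c $ j) *\<^sub>R u j)"
    for c :: "real^'n"
  have lin: "linear f"
    by (rule linearI)
      (simp_all add: f_def scaleR_add_left sum.distrib scaleR_sum_right algebra_simps)
  have "c = 0" if "f c = 0" for c
  proof -
    let ?a = "\<Sum>i\<in>I. (c $ i) *\<^sub>R e i" and ?b = "\<Sum>j\<in>UNIV - I. (c $ j) *\<^sub>R u j"
    have "?a = - ?b"
      using that by (simp add: f_def eq_neg_iff_add_eq_0)
    then have "?a \<bullet> ?a = 0"
      using orthogonal_sum_e_sum_u[where I=I and \<alpha>="($) c" and \<beta>="($) c"] by simp
    then have "?a = 0" and "?b = 0"
      using \<open>?a = - ?b\<close> by auto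
    show "c = 0"
    proof (rule vec_eq_iff[THEN iffD2], intro allI)
      fix k
      show "c $ k = 0 $ k"
        using inner_sum_e_u[where I=I and \<alpha>="($) c" and k=k] \<open>?a = 0\<close>
          inner_sum_u_e[where J="UNIV - I" and \<beta>="($) c" and k=k] \<open>?b = 0\<close>
        by (cases "k \<in> I") auto
    qed
  qed
  then have "surj f"
    using lin linear_injective_0 linear_injective_imp_surjective by blast
  then obtain c where "x = f c"
    by (metis surjD)
  then show ?thesis
    unfolding f_def by blast
qed

lemma primal_cone_eq_halfspaces: "primal_cone = {z. \<forall>i. z \<bullet> u i \<le> 0}"
proof (intro set_eqI iffI)
  fix z assume "z \<in> primal_cone"
  then show "z \<in> {z. \<forall>i. z \<bullet> u i \<le> 0}"
    by (auto simp: primal_cone_def inner_sum_e_u)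
next
  fix z assume z: "z \<in> {z. \<forall>i. z \<bullet> u i \<le> 0}"
  obtain \<alpha> \<beta> where "z = (\<Sum>i\<in>UNIV. \<alpha> i *\<^sub>R e i) + (\<Sum>j\<in>UNIV - UNIV. \<beta> j *\<^sub>R u j)"
    using mixed_representation_exists by blast
  then have z_eq: "z = (\<Sum>i\<in>UNIV. \<alpha> i *\<^sub>R e i)"
    by simp
  have "\<alpha> i \<ge> 0" for i
  proof -
    have "z \<bullet> u i \<le> 0"
      using z by simp
    then show ?thesis
      using inner_sum_e_u[where I=UNIV and \<alpha>=\<alpha> and k=i] by (simp add: z_eq)
  qed
  then show "z \<in> primal_cone"
    unfolding primal_cone_def z_eq by blast
qed

lemma polar_primal_cone_eq_halfspaces: "polar_cone primal_cone = {y. \<forall>j. y \<bullet> e j \<le> 0}"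
proof (intro set_eqI iffI)
  fix y assume y: "y \<in> polar_cone primal_cone"
  have "e j \<in> primal_cone" for j
  proof -
    have "e j = (\<Sum>i\<in>UNIV. (if i = j then 1 else 0) *\<^sub>R e i)"
      by (simp add: if_distrib[where f="\<lambda>c. c *\<^sub>R e _"] cong: if_cong)
    then show ?thesis
      unfolding primal_cone_def by (intro CollectI exI[of _ "\<lambda>i. if i = j then 1 else 0"]) auto
  qed
  then show "y \<in> {y. \<forall>j. y \<bullet> e j \<le> 0}"
    using y unfolding polar_cone_def by blast
next
  fix y assume y: "y \<in> {y. \<forall>j. y \<bullet> e j \<le> 0}"
  show "y \<in> polar_cone primal_cone"
    unfolding polar_cone_def primal_cone_def
    using y by (auto simp: inner_sum_right intro!: sum_nonpos mult_nonneg_nonpos)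
qed

lemma polar_primal_cone: "polar_cone primal_cone = dual_cone"
proof (intro set_eqI iffI)
  fix y assume y: "y \<in> polar_cone primal_cone"
  obtain \<alpha> \<beta> where "y = (\<Sum>i\<in>{}. \<alpha> i *\<^sub>R e i) + (\<Sum>j\<in>UNIV - {}. \<beta> j *\<^sub>R u j)"
    using mixed_representation_exists by blast
  then have y_eq: "y = (\<Sum>j\<in>UNIV. \<beta> j *\<^sub>R u j)"
    by simp
  have "\<beta> i \<ge> 0" for i
  proof -
    have "y \<bullet> e i \<le> 0"
      using y by (simp add: polar_primal_cone_eq_halfspaces)
    then show ?thesis
      using inner_sum_u_e[where J=UNIV and \<beta>=\<beta> and k=i] by (simp add: y_eq)
  qed
  then show "y \<in> dual_cone"
    unfolding dual_cone_def y_eq by blast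
next
  fix y assume "y \<in> dual_cone"
  then show "y \<in> polar_cone primal_cone"
    by (auto simp: dual_cone_def polar_primal_cone_eq_halfspaces inner_sum_u_e)
qed

lemma closed_primal_cone: "closed primal_cone"
  and convex_primal_cone: "convex primal_cone"
  and cone_primal_cone: "cone primal_cone"
proof -
  have eq: "primal_cone = (\<Inter>i. {z. u i \<bullet> z \<le> 0})"
    by (auto simp: primal_cone_eq_halfspaces inner_commute)
  show "closed primal_cone" "convex primal_cone"
    unfolding eq by (auto intro!: closed_INT convex_INT closed_halfspace_le convex_halfspace_le)
  show "cone primal_cone"
    unfolding eq cone_def by (auto intro: mult_nonneg_nonpos)
qed

definition sign_correct_representation
    :: "real^'n \<Rightarrow> 'n set \<Rightarrow> ('n \<Rightarrow> real) \<Rightarrow> ('n \<Rightarrow> real) \<Rightarrow> bool" where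
  "sign_correct_representation x I \<alpha> \<beta> \<longleftrightarrow>
    x = (\<Sum>i\<in>I. \<alpha> i *\<^sub>R e i) + (\<Sum>j\<in>UNIV - I. \<beta> j *\<^sub>R u j)
    \<and> (\<forall>j\<in>UNIV - I. \<beta> j > 0) \<and> (\<forall>i\<in>I. \<alpha> i \<ge> 0)"

lemma proj_sign_correct_representation:
  assumes "sign_correct_representation x I \<alpha> \<beta>"
  shows "proj primal_cone x = (\<Sum>i\<in>I. \<alpha> i *\<^sub>R e i)"
    and "proj (polar_cone primal_cone) x = (\<Sum>j\<in>UNIV - I. \<beta> j *\<^sub>R u j)"
proof -
  let ?a = "\<Sum>i\<in>I. \<alpha> i *\<^sub>R e i" and ?b = "\<Sum>j\<in>UNIV - I. \<beta> j *\<^sub>R u j"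
  have x: "x = ?a + ?b" and \<beta>_pos: "\<forall>j\<in>UNIV - I. \<beta> j > 0" and \<alpha>_nonneg: "\<forall>i\<in>I. \<alpha> i \<ge> 0"
    using assms by (simp_all add: sign_correct_representation_def)
  have a_in: "?a \<in> primal_cone"
    using \<alpha>_nonneg by (simp add: primal_cone_eq_halfspaces inner_sum_e_u)
  have b_in: "?b \<in> polar_cone primal_cone"
    using \<beta>_pos by (simp add: polar_primal_cone_eq_halfspaces inner_sum_u_e less_imp_le)
  show "proj primal_cone x = ?a"
    using closest_point_add_orthogonal[OF closed_primal_cone convex_primal_cone a_in, of ?b]
      b_in orthogonal_sum_e_sum_u
    by (simp add: x polar_cone_def inner_commute)
  show "proj (polar_cone primal_cone) x = ?b"
    using closest_point_add_orthogonal[OF closed_polar_cone convex_polar_cone b_in, of ?a]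
      a_in orthogonal_sum_e_sum_u
    by (simp add: x polar_cone_def inner_commute add.commute)
qed

lemma sign_correct_representation_index:
  assumes "sign_correct_representation x I \<alpha> \<beta>"
  shows "I = {k. proj (polar_cone primal_cone) x \<bullet> e k = 0}"
proof (rule set_eqI)
  fix k
  have "proj (polar_cone primal_cone) x \<bullet> e k = (if k \<in> I then 0 else - \<beta> k)"
    using inner_sum_u_e[where J="UNIV - I" and \<beta>=\<beta> and k=k]
    by (simp add: proj_sign_correct_representation(2)[OF assms])
  moreover have "k \<notin> I \<Longrightarrow> \<beta> k > 0"
    using assms by (simp add: sign_correct_representation_def)
  ultimately show "k \<in> I \<longleftrightarrow> k \<in> {k. proj (polar_cone primal_cone) x \<bullet> e k = 0}"
    by (cases "k \<in> I") auto
qed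

lemma sign_correct_representation_exists: "\<exists>I \<alpha> \<beta>. sign_correct_representation x I \<alpha> \<beta>"
proof -
  define p where "p = proj primal_cone x"
  have "0 \<in> primal_cone"
    by (simp add: primal_cone_eq_halfspaces)
  then have nonempty: "primal_cone \<noteq> {}"
    by blast
  have pK: "p \<in> primal_cone"
    unfolding p_def using closest_point_in_set[OF closed_primal_cone nonempty] .
  note moreau = moreau_decomposition[OF closed_primal_cone convex_primal_cone cone_primal_cone
      nonempty, of x, folded p_def]
  obtain l where l: "p = (\<Sum>i\<in>UNIV. l i *\<^sub>R e i)" "\<forall>i. l i \<ge> 0"
    using pK unfolding primal_cone_def by blast
  obtain m where m: "x - p = (\<Sum>j\<in>UNIV. m j *\<^sub>R u j)" "\<forall>j. m j \<ge> 0"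
    using moreau(1) unfolding polar_primal_cone dual_cone_def by blast
  have "(\<Sum>i\<in>UNIV. l i * m i) = - ((\<Sum>j\<in>UNIV. m j *\<^sub>R u j) \<bullet> (\<Sum>i\<in>UNIV. l i *\<^sub>R e i))"
    by (simp add: inner_sum_right inner_sum_u_e sum_negf)
  also have "\<dots> = 0"
    using moreau(2) by (simp only: l(1)[symmetric] m(1)[symmetric] neg_equal_0_iff_equal)
  \<comment> \<open>complementary slackness\<close>
  finally have "l i * m i = 0" for i
    using l(2) m(2) sum_nonneg_eq_0_iff[of UNIV "\<lambda>i. l i * m i"] by simp
  then have "p = (\<Sum>i\<in>{i. m i = 0}. l i *\<^sub>R e i)"
    unfolding l(1) by (intro sum.mono_neutral_right) auto
  moreover have "x - p = (\<Sum>j\<in>UNIV - {i. m i = 0}. m j *\<^sub>R u j)"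
    unfolding m(1) by (intro sum.mono_neutral_right) auto
  ultimately have "x = (\<Sum>i\<in>{i. m i = 0}. l i *\<^sub>R e i) + (\<Sum>j\<in>UNIV - {i. m i = 0}. m j *\<^sub>R u j)"
    by (metis diff_add_cancel add.commute)
  moreover have "\<forall>j\<in>UNIV - {i. m i = 0}. m j > 0"
    using m(2) by (simp add: less_le)
  ultimately have "sign_correct_representation x {i. m i = 0} l m"
    using l(2) by (simp add: sign_correct_representation_def)
  then show ?thesis
    by blast
qed

lemma sign_correct_representation_unique: "\<exists>!I. \<exists>\<alpha> \<beta>. sign_correct_representation x I \<alpha> \<beta>"
  using sign_correct_representation_exists[of x] sign_correct_representation_index
  by (metis (no_types))

end

theorem theorem2:
  fixes e u :: "'n::finite \<Rightarrow> real^'n" and x :: "real^'n" and K :: "(real^'n) set"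
  assumes e_indep: "inj e" "independent (range e)"
    and K_def: "K = {(\<Sum>i\<in>UNIV. l i *\<^sub>R e i) | l. \<forall>i. l i \<ge> 0}"
    and u_dual: "\<And>i j. e j \<bullet> u i = (if j = i then -1 else 0)"
  shows "polar_cone K = {(\<Sum>i\<in>UNIV. m i *\<^sub>R u i) | m. \<forall>i. m i \<ge> 0}
    \<and> (\<forall>I. \<exists>\<alpha> \<beta>. x = (\<Sum>i\<in>I. \<alpha> i *\<^sub>R e i) + (\<Sum>j\<in>UNIV - I. \<beta> j *\<^sub>R u j))
    \<and> (\<exists>!I. \<exists>\<alpha> \<beta>. x = (\<Sum>i\<in>I. \<alpha> i *\<^sub>R e i) + (\<Sum>j\<in>UNIV - I. \<beta> j *\<^sub>R u j)
              \<and> (\<forall>j\<in>UNIV - I. \<beta> j > 0) \<and> (\<forall>i\<in>I. \<alpha> i \<ge> 0))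
    \<and> (\<forall>I \<alpha> \<beta>. x = (\<Sum>i\<in>I. \<alpha> i *\<^sub>R e i) + (\<Sum>j\<in>UNIV - I. \<beta> j *\<^sub>R u j)
              \<and> (\<forall>j\<in>UNIV - I. \<beta> j > 0) \<and> (\<forall>i\<in>I. \<alpha> i \<ge> 0)
          \<longrightarrow> proj K x = (\<Sum>i\<in>I. \<alpha> i *\<^sub>R e i)
            \<and> proj (polar_cone K) x = (\<Sum>j\<in>UNIV - I. \<beta> j *\<^sub>R u j))"
proof -
  interpret biorthogonal_system e u
    using u_dual by unfold_locales
  have K: "K = primal_cone"
    by (simp add: K_def primal_cone_def)
  show ?thesis
    unfolding K
    using polar_primal_cone[unfolded dual_cone_def] mixed_representation_exists[of x]
      sign_correct_representation_unique[of x, unfolded sign_correct_representation_def]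
      proj_sign_correct_representation[of x, unfolded sign_correct_representation_def]
    by blast
qed

end
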